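(* Let $f(\alpha,\beta)$, $g(\alpha,\beta)$, $h(\alpha)$ be $2\pi$-periodic in each argument and suppose there is a constant $c\neq0$ such that for all $\alpha,\beta$: $f(\alpha,\beta)=-f(\beta,\alpha)$, $g(\alpha,\beta)=-g(\beta,\alpha)$, $h(\alpha)h(\alpha+\pi)=c$, $f(\alpha,\beta)f(\alpha+\pi,\beta)=-c$, and $g(\alpha,\beta)=c^{-1}f(\alpha,\beta)h(\alpha)h(\beta)$. Then the quad-equation $$f(\theta,\theta')x_{B'}-g(\theta,\theta')x_B=i\big(h(\theta')x_{W'}-h(\theta)x_W\big)$$ is 3D-consistent (in the sense described in the context) if and only if for all $\alpha,\beta,\gamma$ $$f(\alpha,\beta)h(\alpha)h(\beta)+f(\beta,\gamma)h(\beta)h(\gamma)+f(\gamma,\alpha)h(\gamma)h(\alpha)=f(\alpha,\beta)f(\beta,\gamma)f(\gamma,\alpha),$$ which is equivalent to $$g(\alpha,\beta)+g(\beta,\gamma)+g(\gamma,\alpha)=c^{-1}f(\alpha,\beta)f(\beta,\gamma)f(\gamma,\alpha).$$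
   Context: The quad-equation is imposed on a rhombus with black vertices $B,B'$ and white vertices $W,W'$, where $\theta,\theta'$ are the labels of the edges $B\to W$, $B\to W'$, i.e. $e^{i\theta}=W-B$, $e^{i\theta'}=W'-B$ as points in $\mathbb C$. Under the stated symmetry conditions this equation is the same (up to a nonzero factor) whichever black vertex is taken as $B$ and in whichever order $W,W'$ are taken. 3D-consistency: consider a combinatorial cube with vertices $x_I$, $I\subseteq\{1,2,3\}$, placed at formal points $P_I=\sum_{i\in I}e^{i\alpha_i}$ with $(\alpha_1,\alpha_2,\alpha_3)=(\alpha,\beta,\gamma)$; $x_I$ is black if $|I|$ is even and white otherwise, every edge joins a black and a white vertex, and the edge label $\theta$ of an edge from black $P$ to white $Q$ is defined by $e^{i\theta}=Q-P$. Impose the quad-equation on all six faces. For generic initial values $x_\emptyset,x_1,x_2,x_3$, the three faces containing $x_\emptyset$ determine $x_{12},x_{13},x_{23}$, and then each of the three faces containing $x_{123}$ determines a value of $x_{123}$. The equation is 3D-consistent if these three values of $x_{123}$ coincide for all initial data. *)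

theory Defs
  imports Complex_Main
begin

text \<open>Labels alpha, beta are non-degenerate if they are not congruent mod pi
  (i.e. the corresponding rhombus is non-degenerate).\<close>
definition nondeg :: "real \<Rightarrow> real \<Rightarrow> bool" where
  "nondeg a b \<longleftrightarrow> (\<forall>k::int. a - b \<noteq> of_int k * pi)"

text \<open>Edge label of an edge from black point P to white point Q: a real theta with
  exp(i theta) = Q - P (determined mod 2 pi; the functions used are 2pi-periodic).\<close>
definition edge_label :: "complex \<Rightarrow> complex \<Rightarrow> real" where
  "edge_label P Q = (SOME t. cis t = Q - P)"

text \<open>The quad-equation on a rhombus with black vertices B, B' and white vertices
  W, W' (positions), with values xB, xB', xW, xW'; theta, theta' are the labels of
  the edges B to W and B to W'.\<close>
definition quad_eq ::
  "(real \<Rightarrow> real \<Rightarrow> complex) \<Rightarrow> (real \<Rightarrow> real \<Rightarrow> complex) \<Rightarrow> (real \<Rightarrow> complex) \<Rightarrow>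
   complex \<Rightarrow> complex \<Rightarrow> complex \<Rightarrow> complex \<Rightarrow>
   complex \<Rightarrow> complex \<Rightarrow> complex \<Rightarrow> complex \<Rightarrow> bool" where
  "quad_eq f g h B B' W W' xB xB' xW xW' \<longleftrightarrow>
     (let t = edge_label B W; t' = edge_label B W' in
        f t t' * xB' - g t t' * xB = \<i> * (h t' * xW' - h t * xW))"

text \<open>3D-consistency on the cube with vertices at P_I = sum of cis(alpha_i), i in I.
  x0 = x_emptyset, x1, x2, x3 initial data; x12, x13, x23 determined by the faces
  containing x_emptyset; y1, y2, y3 are the values of x_123 determined by the faces
  containing x_1, x_2, x_3 respectively (together with x_123).\<close>
definition cube_consistent ::
  "(real \<Rightarrow> real \<Rightarrow> complex) \<Rightarrow> (real \<Rightarrow> real \<Rightarrow> complex) \<Rightarrow> (real \<Rightarrow> complex) \<Rightarrow>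
   real \<Rightarrow> real \<Rightarrow> real \<Rightarrow> bool" where
  "cube_consistent f g h a b c \<longleftrightarrow>
    (let P0 = 0; P1 = cis a; P2 = cis b; P3 = cis c;
         P12 = cis a + cis b; P13 = cis a + cis c; P23 = cis b + cis c;
         P123 = cis a + cis b + cis c in
     \<forall>x0 x1 x2 x3 x12 x13 x23 y1 y2 y3.
       quad_eq f g h P0 P12 P1 P2 x0 x12 x1 x2 \<and>
       quad_eq f g h P0 P13 P1 P3 x0 x13 x1 x3 \<and>
       quad_eq f g h P0 P23 P2 P3 x0 x23 x2 x3 \<and>
       quad_eq f g h P12 P13 P1 P123 x12 x13 x1 y1 \<and>
       quad_eq f g h P12 P23 P2 P123 x12 x23 x2 y2 \<and>
       quad_eq f g h P13 P23 P3 P123 x13 x23 x3 y3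
       \<longrightarrow> y1 = y2 \<and> y2 = y3)"

end

theory Submission
  imports Defs "HOL-Library.Periodic_Fun"
begin

(* Write h_a = h a and f_ab = f a b for the labels a, b, d of the cube. After eliminating g by
   g = c^-1 f h h, the three faces at x_0 are linear equations for x_12, x_13, x_23, and the faces
   through x_1, x_2, x_3 yield values y1, y2, y3 of x_123 that are linear in the initial data. The
   relations f (a + pi) b = -c / f_ab and h (a + pi) = c / h_a express the labels of the far faces
   through those at the origin, and elimination gives
     h_a h_b h_d f_ab f_bd f_da (y1 - y2) = c D (h_b x_2 - h_a x_1),
     h_a h_b h_d f_ab f_bd f_da (y2 - y3) = c D (h_d x_3 - h_b x_2),
   where D is the difference of the two sides of the claimed identity. Every face equation can be
   solved for its new vertex, so the initial data are arbitrary and consistency holds iff D = 0;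
   the second form of the identity is c^-1 D = 0. *)

lemma edge_label_cis:
  assumes "Q - P = cis t"
  obtains k :: int where "edge_label P Q = t + of_int k * (2 * pi)"
proof -
  have "cis (edge_label P Q) = cis t"
    unfolding edge_label_def using someI[of "\<lambda>s. cis s = Q - P" t] assms by simp
  then have "sin (edge_label P Q) = sin t \<and> cos (edge_label P Q) = cos t"
    by (metis cis.sel)
  then show thesis
    using that by (auto simp: sin_cos_eq_iff mult.commute)
qed

lemma periodic_plus_of_int:
  fixes \<phi> :: "real \<Rightarrow> 'a"
  assumes "\<And>x. \<phi> (x + p) = \<phi> x"
  shows "\<phi> (x + of_int k * p) = \<phi> x"
proof -
  interpret periodic_fun_simple \<phi> p
    by standard (rule assms)
  show ?thesis
    by (rule plus_of_int)
qed

lemma nondeg_commute: "nondeg a b \<longleftrightarrow> nondeg b a"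
  unfolding nondeg_def by (metis minus_diff_eq mult_minus_left of_int_minus minus_minus)

definition labelled_quad_eq ::
  "(real \<Rightarrow> real \<Rightarrow> complex) \<Rightarrow> (real \<Rightarrow> real \<Rightarrow> complex) \<Rightarrow> (real \<Rightarrow> complex) \<Rightarrow>
   real \<Rightarrow> real \<Rightarrow> complex \<Rightarrow> complex \<Rightarrow> complex \<Rightarrow> complex \<Rightarrow> bool" where
  "labelled_quad_eq f g h t t' xB xB' xW xW' \<longleftrightarrow>
     f t t' * xB' - g t t' * xB = \<i> * (h t' * xW' - h t * xW)"

lemma labelled_quad_eq_solvable_black:
  assumes "f t t' \<noteq> 0"
  shows "\<exists>xB'. labelled_quad_eq f g h t t' xB xB' xW xW'"
  using assms unfolding labelled_quad_eq_def
  by (intro exI[of _ "(\<i> * (h t' * xW' - h t * xW) + g t t' * xB) / f t t'"]) simp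

lemma labelled_quad_eq_solvable_white:
  assumes "h t' \<noteq> 0"
  shows "\<exists>xW'. labelled_quad_eq f g h t t' xB xB' xW xW'"
  using assms unfolding labelled_quad_eq_def
  by (intro exI[of _ "((f t t' * xB' - g t t' * xB) / \<i> + h t * xW) / h t'"]) (simp add: field_simps)

lemma quad_eq_cis:
  assumes f_per1: "\<And>a b. f (a + 2 * pi) b = f a b"
    and f_per2: "\<And>a b. f a (b + 2 * pi) = f a b"
    and g_per1: "\<And>a b. g (a + 2 * pi) b = g a b"
    and g_per2: "\<And>a b. g a (b + 2 * pi) = g a b"
    and h_per: "\<And>a. h (a + 2 * pi) = h a"
    and "W - B = cis t" and "W' - B = cis t'"
  shows "quad_eq f g h B B' W W' xB xB' xW xW' \<longleftrightarrow> labelled_quad_eq f g h t t' xB xB' xW xW'"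
proof -
  obtain k k' :: int where
    t: "edge_label B W = t + of_int k * (2 * pi)" and t': "edge_label B W' = t' + of_int k' * (2 * pi)"
    using edge_label_cis assms(6,7) by metis
  have "f (edge_label B W) (edge_label B W') = f t t'"
    unfolding t t'
    using periodic_plus_of_int[of "\<lambda>a. f a _", OF f_per1] periodic_plus_of_int[of "f t", OF f_per2]
    by simp
  moreover have "g (edge_label B W) (edge_label B W') = g t t'"
    unfolding t t'
    using periodic_plus_of_int[of "\<lambda>a. g a _", OF g_per1] periodic_plus_of_int[of "g t", OF g_per2]
    by simp
  moreover have "h (edge_label B W) = h t" "h (edge_label B W') = h t'"
    unfolding t t' using periodic_plus_of_int[of h, OF h_per] by simp_all
  ultimately show ?thesis
    unfolding quad_eq_def labelled_quad_eq_def Let_def by simp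
qed

lemma cube_value_differences_ring:
  fixes c k j fab fbd fda fad fab' fad' fbd' ha hb hd ha' hb' x0 x1 x2 x3 x12 x13 x23 y1 y2 y3
    :: "'a::idom"
  \<comment> \<open>fab = f a b, fab' = f (a + pi) b, ha' = h (a + pi), ..., k = inverse c, j = \<i>\<close>
  assumes rel: "c * k = 1" "j * j = -1" "fad = - fda"
      "fab * fab' = - c" "fbd * fbd' = - c" "fad * fad' = - c" "ha * ha' = c" "hb * hb' = c"
    and e1: "fab * x12 - k * fab * ha * hb * x0 = j * (hb * x2 - ha * x1)"
    and e2: "fad * x13 - k * fad * ha * hd * x0 = j * (hd * x3 - ha * x1)"
    and e3: "fbd * x23 - k * fbd * hb * hd * x0 = j * (hd * x3 - hb * x2)"
    and e4: "fbd' * x13 - k * fbd' * hb' * hd * x12 = j * (hd * y1 - hb' * x1)"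
    and e5: "fad' * x23 - k * fad' * ha' * hd * x12 = j * (hd * y2 - ha' * x2)"
    and e6: "fab' * x23 - k * fab' * ha' * hb * x13 = j * (hb * y3 - ha' * x3)"
  defines "D \<equiv> fab * ha * hb + fbd * hb * hd + fda * hd * ha - fab * fbd * fda"
  shows "ha * hb * hd * fab * fbd * fda * (y1 - y2) = c * D * (hb * x2 - ha * x1)"
    and "ha * hb * hd * fab * fbd * fda * (y2 - y3) = c * D * (hd * x3 - hb * x2)"
proof -
  have y1: "hd * fab * fbd * fda * hb * y1
      = c * (x1 * (fab * fbd * fda - ha * hb * fab - ha * hd * fda) + x2 * hd * hb * fda + x3 * hd * hb * fab)"
    using rel e1 e2 e4 by algebra
  have y2: "hd * fab * fbd * fda * ha * y2
      = c * (x1 * hd * ha * fbd + x2 * (fab * fbd * fda - hb * ha * fab - hb * hd * fbd) + x3 * hd * ha * fab)"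
    using rel e1 e3 e5 by algebra
  have y3: "hb * fab * fbd * fda * ha * y3
      = c * (x1 * hb * ha * fbd + x2 * hb * ha * fda + x3 * (fab * fbd * fda - hd * ha * fda - hb * hd * fbd))"
    using rel e2 e3 e6 by algebra
  show "ha * hb * hd * fab * fbd * fda * (y1 - y2) = c * D * (hb * x2 - ha * x1)"
    using y1 y2 unfolding D_def by algebra
  show "ha * hb * hd * fab * fbd * fda * (y2 - y3) = c * D * (hd * x3 - hb * x2)"
    using y2 y3 unfolding D_def by algebra
qed

definition consistency_defect ::
  "(real \<Rightarrow> real \<Rightarrow> complex) \<Rightarrow> (real \<Rightarrow> complex) \<Rightarrow> real \<Rightarrow> real \<Rightarrow> real \<Rightarrow> complex" where
  "consistency_defect f h a b d =
     f a b * h a * h b + f b d * h b * h d + f d a * h d * h a - f a b * f b d * f d a"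

text \<open>The antisymmetry and periodicity of g follow from \<open>g_def\<close> and are not assumed.\<close>

locale quad_equation =
  fixes f g :: "real \<Rightarrow> real \<Rightarrow> complex" and h :: "real \<Rightarrow> complex" and c :: complex
  assumes c_nz: "c \<noteq> 0"
    and f_per1: "\<And>a b. f (a + 2 * pi) b = f a b"
    and f_per2: "\<And>a b. f a (b + 2 * pi) = f a b"
    and h_per: "\<And>a. h (a + 2 * pi) = h a"
    and f_anti: "\<And>a b. f a b = - f b a"
    and h_prod: "\<And>a. h a * h (a + pi) = c"
    and f_prod: "\<And>a b. nondeg a b \<Longrightarrow> f a b * f (a + pi) b = - c"
    and g_def: "\<And>a b. g a b = inverse c * f a b * h a * h b"
begin

lemma g_per1: "g (a + 2 * pi) b = g a b"
  by (simp add: g_def f_per1 h_per)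

lemma g_per2: "g a (b + 2 * pi) = g a b"
  by (simp add: g_def f_per2 h_per)

lemma h_nonzero: "h a \<noteq> 0"
  using h_prod[of a] c_nz by auto

lemma f_nonzero: "nondeg a b \<Longrightarrow> f a b \<noteq> 0"
  using f_prod[of a b] c_nz by auto

lemma cube_consistent_iff_labelled:
  "cube_consistent f g h a b d \<longleftrightarrow>
    (\<forall>x0 x1 x2 x3 x12 x13 x23 y1 y2 y3.
       labelled_quad_eq f g h a b x0 x12 x1 x2 \<and>
       labelled_quad_eq f g h a d x0 x13 x1 x3 \<and>
       labelled_quad_eq f g h b d x0 x23 x2 x3 \<and>
       labelled_quad_eq f g h (b + pi) d x12 x13 x1 y1 \<and>
       labelled_quad_eq f g h (a + pi) d x12 x23 x2 y2 \<and>
       labelled_quad_eq f g h (a + pi) b x13 x23 x3 y3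
       \<longrightarrow> y1 = y2 \<and> y2 = y3)"
proof -
  note label = quad_eq_cis[of f g h, OF f_per1 f_per2 g_per1 g_per2 h_per]
  have "cis u - 0 = cis u" for u
    by simp
  moreover have "cis a - (cis a + cis b) = cis (b + pi)" "cis b - (cis a + cis b) = cis (a + pi)"
    "cis d - (cis a + cis d) = cis (a + pi)"
    by (simp_all flip: minus_cis)
  moreover have "cis a + cis b + cis d - (cis a + cis b) = cis d"
    "cis a + cis b + cis d - (cis a + cis d) = cis b"
    by simp_all
  ultimately show ?thesis
    unfolding cube_consistent_def Let_def by (simp only: label)
qed

lemma cube_value_differences:
  assumes "nondeg a b" "nondeg b d" "nondeg d a"
    and "labelled_quad_eq f g h a b x0 x12 x1 x2"
    and "labelled_quad_eq f g h a d x0 x13 x1 x3"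
    and "labelled_quad_eq f g h b d x0 x23 x2 x3"
    and "labelled_quad_eq f g h (b + pi) d x12 x13 x1 y1"
    and "labelled_quad_eq f g h (a + pi) d x12 x23 x2 y2"
    and "labelled_quad_eq f g h (a + pi) b x13 x23 x3 y3"
  shows "h a * h b * h d * f a b * f b d * f d a * (y1 - y2)
           = c * consistency_defect f h a b d * (h b * x2 - h a * x1)"
    and "h a * h b * h d * f a b * f b d * f d a * (y2 - y3)
           = c * consistency_defect f h a b d * (h d * x3 - h b * x2)"
proof -
  have "c * inverse c = 1" "\<i> * \<i> = -1" "f a d = - f d a"
    "f a b * f (a + pi) b = - c" "f b d * f (b + pi) d = - c" "f a d * f (a + pi) d = - c"
    "h a * h (a + pi) = c" "h b * h (b + pi) = c"
    using c_nz f_anti[of a d] f_prod[OF assms(1)] f_prod[OF assms(2)] f_prod[of a d] assms(3)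
      nondeg_commute[of a d] h_prod
    by simp_all
  from cube_value_differences_ring[OF this assms(4-9)[unfolded labelled_quad_eq_def g_def]]
  show "h a * h b * h d * f a b * f b d * f d a * (y1 - y2)
          = c * consistency_defect f h a b d * (h b * x2 - h a * x1)"
    and "h a * h b * h d * f a b * f b d * f d a * (y2 - y3)
          = c * consistency_defect f h a b d * (h d * x3 - h b * x2)"
    unfolding consistency_defect_def by simp_all
qed

lemma cube_consistent_iff_defect:
  assumes nondeg: "nondeg a b" "nondeg b d" "nondeg d a"
  shows "cube_consistent f g h a b d \<longleftrightarrow> consistency_defect f h a b d = 0"
proof
  assume consistent: "cube_consistent f g h a b d"
  have nonzero: "f a b \<noteq> 0" "f a d \<noteq> 0" "f b d \<noteq> 0" "h b \<noteq> 0" "h d \<noteq> 0"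
    using nondeg f_nonzero h_nonzero nondeg_commute by blast+
  obtain x12 where e1: "labelled_quad_eq f g h a b 0 x12 0 1"
    using labelled_quad_eq_solvable_black[of f a b] nonzero(1) by blast
  obtain x13 where e2: "labelled_quad_eq f g h a d 0 x13 0 0"
    using labelled_quad_eq_solvable_black[of f a d] nonzero(2) by blast
  obtain x23 where e3: "labelled_quad_eq f g h b d 0 x23 1 0"
    using labelled_quad_eq_solvable_black[of f b d] nonzero(3) by blast
  obtain y1 where e4: "labelled_quad_eq f g h (b + pi) d x12 x13 0 y1"
    using labelled_quad_eq_solvable_white[of h d] nonzero(5) by blast
  obtain y2 where e5: "labelled_quad_eq f g h (a + pi) d x12 x23 1 y2"
    using labelled_quad_eq_solvable_white[of h d] nonzero(5) by blast
  obtain y3 where e6: "labelled_quad_eq f g h (a + pi) b x13 x23 0 y3"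
    using labelled_quad_eq_solvable_white[of h b] nonzero(4) by blast
  have "y1 = y2"
    using consistent e1 e2 e3 e4 e5 e6 unfolding cube_consistent_iff_labelled by blast
  then have "c * consistency_defect f h a b d * h b = 0"
    using cube_value_differences(1)[OF nondeg e1 e2 e3 e4 e5 e6] by simp
  then show "consistency_defect f h a b d = 0"
    using c_nz nonzero(4) by simp
next
  assume defect: "consistency_defect f h a b d = 0"
  have prefactor: "h a * h b * h d * f a b * f b d * f d a \<noteq> 0"
    using nondeg by (simp add: h_nonzero f_nonzero)
  show "cube_consistent f g h a b d"
    unfolding cube_consistent_iff_labelled
  proof (intro allI impI, elim conjE)
    fix x0 x1 x2 x3 x12 x13 x23 y1 y2 y3
    assume "labelled_quad_eq f g h a b x0 x12 x1 x2" "labelled_quad_eq f g h a d x0 x13 x1 x3"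
      "labelled_quad_eq f g h b d x0 x23 x2 x3" "labelled_quad_eq f g h (b + pi) d x12 x13 x1 y1"
      "labelled_quad_eq f g h (a + pi) d x12 x23 x2 y2" "labelled_quad_eq f g h (a + pi) b x13 x23 x3 y3"
    from cube_value_differences[OF nondeg this]
    have "h a * h b * h d * f a b * f b d * f d a * (y1 - y2) = 0"
      "h a * h b * h d * f a b * f b d * f d a * (y2 - y3) = 0"
      by (simp_all add: defect)
    then show "y1 = y2 \<and> y2 = y3"
      using prefactor by simp
  qed
qed

lemma g_cyclic_sum:
  "g a b + g b d + g d a - inverse c * f a b * f b d * f d a = inverse c * consistency_defect f h a b d"
  by (simp add: g_def consistency_defect_def algebra_simps)

end

theorem theorem1:
  fixes f g :: "real \<Rightarrow> real \<Rightarrow> complex" and h :: "real \<Rightarrow> complex" and c :: complex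
  assumes c_nz: "c \<noteq> 0"
    and f_per1: "\<And>a b. f (a + 2 * pi) b = f a b"
    and f_per2: "\<And>a b. f a (b + 2 * pi) = f a b"
    and g_per1: "\<And>a b. g (a + 2 * pi) b = g a b"
    and g_per2: "\<And>a b. g a (b + 2 * pi) = g a b"
    and h_per: "\<And>a. h (a + 2 * pi) = h a"
    and f_anti: "\<And>a b. f a b = - f b a"
    and g_anti: "\<And>a b. g a b = - g b a"
    and h_prod: "\<And>a. h a * h (a + pi) = c"
    and f_prod: "\<And>a b. nondeg a b \<Longrightarrow> f a b * f (a + pi) b = - c"
    and g_def: "\<And>a b. g a b = inverse c * f a b * h a * h b"
  shows "((\<forall>a b d. nondeg a b \<and> nondeg b d \<and> nondeg d a \<longrightarrow> cube_consistent f g h a b d)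
          \<longleftrightarrow>
          (\<forall>a b d. nondeg a b \<and> nondeg b d \<and> nondeg d a \<longrightarrow>
             f a b * h a * h b + f b d * h b * h d + f d a * h d * h a
               = f a b * f b d * f d a))
       \<and> ((\<forall>a b d. nondeg a b \<and> nondeg b d \<and> nondeg d a \<longrightarrow>
             f a b * h a * h b + f b d * h b * h d + f d a * h d * h a
               = f a b * f b d * f d a)
          \<longleftrightarrow>
          (\<forall>a b d. nondeg a b \<and> nondeg b d \<and> nondeg d a \<longrightarrow>
             g a b + g b d + g d a = inverse c * f a b * f b d * f d a))"
proof -
  interpret quad_equation f g h c
    by (rule quad_equation.intro) (fact assms)+
  have defect_form: "f a b * h a * h b + f b d * h b * h d + f d a * h d * h a = f a b * f b d * f d a
      \<longleftrightarrow> consistency_defect f h a b d = 0" for a b d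
    by (simp add: consistency_defect_def)
  have g_form: "g a b + g b d + g d a = inverse c * f a b * f b d * f d a
      \<longleftrightarrow> consistency_defect f h a b d = 0" for a b d
    using g_cyclic_sum[of a b d] c_nz by (metis eq_iff_diff_eq_0 inverse_nonzero_iff_nonzero mult_eq_0_iff)
  show ?thesis
    using cube_consistent_iff_defect unfolding defect_form g_form by blast
qed

end
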